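(* Let $\tau$ be a distributive triangle function on $\Delta^+$, $\Sigma$ a ring of subsets of $\Omega\ne\emptyset$, $\gamma$ a $\tau$-decomposable measure on $\Sigma$, and $E\in\Sigma$. Let $f=\sum_{i=1}^n\alpha_i\chi_{E_i}$ with $\alpha_i\in[0,\infty)$ and $E_1,\dots,E_n\in\Sigma$ pairwise disjoint, and $g=\sum_{j=1}^m\beta_j\chi_{F_j}$ with $\beta_j\in[0,\infty)$ and $F_1,\dots,F_m\in\Sigma$ pairwise disjoint. If $f=g$ (as functions on $\Omega$), then $$\bigoplus_{i=1}^n\alpha_i\odot\gamma_{E\cap E_i}=\bigoplus_{j=1}^m\beta_j\odot\gamma_{E\cap F_j},$$ i.e. the $\gamma$-integral $\int_E f\,d\gamma$ of a simple function does not depend on its representation.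
   Context: $\Delta^+$: functions $F:[-\infty,+\infty]\to[0,1]$ non-decreasing, left-continuous on $\mathbb{R}$, $F(x)=0$ for $x\le0$, $F(+\infty)=1$; $\varepsilon_0(x)=1$ if $x>0$, else $0$. Triangle function: symmetric, associative $\tau:\Delta^+\times\Delta^+\to\Delta^+$, non-decreasing in each variable, identity $\varepsilon_0$; $G\oplus H=\tau(G,H)$, $\bigoplus_{k=1}^nG_k=\tau(G_1,\bigoplus_{k=2}^nG_k)$. For $c\ge0$, $c\odot G=\varepsilon_0$ if $c=0$, $(c\odot G)(x)=G(x/c)$ if $c>0$; $\tau$ is distributive if $c\odot(G\oplus H)=(c\odot G)\oplus(c\odot H)$ for all $c\ge0$, $G,H$. A $\tau$-decomposable measure on $\Sigma$ is $\gamma:\Sigma\to\Delta^+$ with $\gamma_\emptyset=\varepsilon_0$ and $\gamma_{A\cup B}=\tau(\gamma_A,\gamma_B)$ for disjoint $A,B\in\Sigma$. For a simple function $f=\sum_{i=1}^n x_i\chi_{E_i}$ ($x_i\ge0$, $E_i\in\Sigma$ pairwise disjoint) one defines $\int_Ef\,d\gamma=\bigoplus_{i=1}^nx_i\odot\gamma_{E\cap E_i}$. *)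

theory Defs
  imports "HOL-Analysis.Analysis"
begin

definition Delta_plus :: "(ereal \<Rightarrow> real) set" where
  "Delta_plus = {F. (\<forall>x. 0 \<le> F x \<and> F x \<le> 1) \<and> mono F
      \<and> (\<forall>x::real. ((\<lambda>y::real. F (ereal y)) \<longlongrightarrow> F (ereal x)) (at_left x))
      \<and> (\<forall>x. x \<le> 0 \<longrightarrow> F x = 0) \<and> F \<infinity> = 1}"

definition eps0 :: "ereal \<Rightarrow> real" where
  "eps0 x = (if x > 0 then 1 else 0)"

definition le_df :: "(ereal \<Rightarrow> real) \<Rightarrow> (ereal \<Rightarrow> real) \<Rightarrow> bool" where
  "le_df F G \<longleftrightarrow> (\<forall>x. F x \<le> G x)"

definition triangle_function ::
  "((ereal \<Rightarrow> real) \<Rightarrow> (ereal \<Rightarrow> real) \<Rightarrow> (ereal \<Rightarrow> real)) \<Rightarrow> bool" where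
  "triangle_function \<tau> \<longleftrightarrow>
     (\<forall>G\<in>Delta_plus. \<forall>H\<in>Delta_plus. \<tau> G H \<in> Delta_plus)
   \<and> (\<forall>G\<in>Delta_plus. \<forall>H\<in>Delta_plus. \<tau> G H = \<tau> H G)
   \<and> (\<forall>G\<in>Delta_plus. \<forall>H\<in>Delta_plus. \<forall>K\<in>Delta_plus. \<tau> G (\<tau> H K) = \<tau> (\<tau> G H) K)
   \<and> (\<forall>G\<in>Delta_plus. \<forall>G'\<in>Delta_plus. \<forall>H\<in>Delta_plus. le_df G G' \<longrightarrow> le_df (\<tau> G H) (\<tau> G' H))
   \<and> (\<forall>G\<in>Delta_plus. \<tau> G eps0 = G)"

definition smul_df :: "real \<Rightarrow> (ereal \<Rightarrow> real) \<Rightarrow> (ereal \<Rightarrow> real)" where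
  "smul_df c G = (if c = 0 then eps0 else (\<lambda>x. G (x / ereal c)))"

definition distributive_tf ::
  "((ereal \<Rightarrow> real) \<Rightarrow> (ereal \<Rightarrow> real) \<Rightarrow> (ereal \<Rightarrow> real)) \<Rightarrow> bool" where
  "distributive_tf \<tau> \<longleftrightarrow> triangle_function \<tau> \<and>
     (\<forall>c\<ge>0. \<forall>G\<in>Delta_plus. \<forall>H\<in>Delta_plus.
        smul_df c (\<tau> G H) = \<tau> (smul_df c G) (smul_df c H))"

definition tau_decomposable ::
  "((ereal \<Rightarrow> real) \<Rightarrow> (ereal \<Rightarrow> real) \<Rightarrow> (ereal \<Rightarrow> real)) \<Rightarrow> 'a set set
     \<Rightarrow> ('a set \<Rightarrow> (ereal \<Rightarrow> real)) \<Rightarrow> bool" where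
  "tau_decomposable \<tau> \<Sigma> \<gamma> \<longleftrightarrow>
     (\<forall>A\<in>\<Sigma>. \<gamma> A \<in> Delta_plus) \<and> \<gamma> {} = eps0 \<and>
     (\<forall>A\<in>\<Sigma>. \<forall>B\<in>\<Sigma>. A \<inter> B = {} \<longrightarrow> \<gamma> (A \<union> B) = \<tau> (\<gamma> A) (\<gamma> B))"

text \<open>Iterated sum: oplus [G1,...,Gn] = \<tau>(G1, oplus [G2,...,Gn]); empty list gives eps0,
  so a singleton list gives \<tau> G1 eps0 = G1.\<close>
fun oplus_list ::
  "((ereal \<Rightarrow> real) \<Rightarrow> (ereal \<Rightarrow> real) \<Rightarrow> (ereal \<Rightarrow> real)) \<Rightarrow> (ereal \<Rightarrow> real) list \<Rightarrow> (ereal \<Rightarrow> real)" where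
  "oplus_list \<tau> [] = eps0"
| "oplus_list \<tau> (G # Gs) = (if Gs = [] then G else \<tau> G (oplus_list \<tau> Gs))"

end

theory Submission
  imports Defs
begin

text \<open>Refine both representations to the common partition of \<open>E\<close> into the cells
  \<open>E \<inter> E i \<inter> F j\<close>. On a nonempty cell \<open>\<alpha> i = \<beta> j\<close>, because \<open>f = g\<close> there. If \<open>\<alpha> i > 0\<close>, the
  sets \<open>F j\<close> cover \<open>E i\<close>, so decomposability of \<open>\<gamma>\<close> and distributivity of \<open>\<tau>\<close> split
  \<open>\<alpha> i \<odot> \<gamma>(E \<inter> E i)\<close> into the \<open>\<oplus>\<close>-sum of \<open>\<alpha> i \<odot> \<gamma>\<close> over the cells in row \<open>i\<close>; symmetrically
  for columns. Both integrals are therefore the same double \<open>\<oplus>\<close>-sum, taken in the two orders.\<close>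

lemma eps0_in_Delta_plus: "eps0 \<in> Delta_plus"
proof -
  have "((\<lambda>y::real. eps0 (ereal y)) \<longlongrightarrow> eps0 (ereal x)) (at_left x)" for x :: real
  proof (rule tendsto_eventually)
    have "eventually (\<lambda>y. y < x) (at_left x)"
      by (simp add: eventually_at_filter)
    moreover have "eventually (\<lambda>y. 0 < x \<longrightarrow> 0 < y) (at_left x)"
      by (cases "0 < x") (auto intro: eventually_mono[OF eventually_at_left_real[of 0 x]])
    ultimately have "eventually (\<lambda>y. y < x \<and> (0 < x \<longrightarrow> 0 < y)) (at_left x)"
      by (rule eventually_conj)
    then show "eventually (\<lambda>y. eps0 (ereal y) = eps0 (ereal x)) (at_left x)"
      by (rule eventually_mono) (auto simp: eps0_def)
  qed
  moreover have "mono eps0"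
    unfolding mono_def eps0_def by auto
  ultimately show ?thesis
    unfolding Delta_plus_def by (auto simp: eps0_def)
qed

lemma ereal_divide_pos_iff: "c > 0 \<Longrightarrow> x / ereal c > 0 \<longleftrightarrow> x > 0"
  by (cases x) (auto simp: divide_ereal_def field_simps)

lemma smul_df_eps0: "c \<ge> 0 \<Longrightarrow> smul_df c eps0 = eps0"
  by (auto simp: smul_df_def eps0_def ereal_divide_pos_iff)

lemma smul_df_in_Delta_plus:
  assumes "c \<ge> 0" and "G \<in> Delta_plus"
  shows "smul_df c G \<in> Delta_plus"
proof (cases "c = 0")
  case True
  then show ?thesis by (simp add: smul_df_def eps0_in_Delta_plus)
next
  case False
  with assms(1) have c: "c > 0" by simp
  have G: "\<forall>x. 0 \<le> G x \<and> G x \<le> 1" "mono G"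
      "\<And>x::real. ((\<lambda>y. G (ereal y)) \<longlongrightarrow> G (ereal x)) (at_left x)"
      "\<And>x. x \<le> 0 \<Longrightarrow> G x = 0" "G \<infinity> = 1"
    using assms(2) unfolding Delta_plus_def by auto
  have "mono (\<lambda>x. G (x / ereal c))"
    using c by (intro monoI monoD[OF G(2)] ereal_divide_right_mono) auto
  moreover have "((\<lambda>y. G (ereal y / ereal c)) \<longlongrightarrow> G (ereal x / ereal c)) (at_left x)" for x :: real
  proof -
    have "filterlim (\<lambda>y. y / c) (at_left (x / c)) (at_left x)"
    proof (rule tendsto_imp_filterlim_at_left)
      show "((\<lambda>y. y / c) \<longlongrightarrow> x / c) (at_left x)"
        using c by (intro tendsto_intros) simp
      show "eventually (\<lambda>y. y / c < x / c) (at_left x)"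
        using c by (simp add: eventually_at_filter divide_strict_right_mono)
    qed
    from filterlim_compose[OF G(3) this] show ?thesis
      using c by (simp add: o_def)
  qed
  moreover have "G (x / ereal c) = 0" if "x \<le> 0" for x
    using c that by (intro G(4)) (cases x, auto simp: divide_ereal_def mult_nonpos_nonneg)
  moreover have "G (\<infinity> / ereal c) = 1"
    using c G(5) by (simp add: divide_ereal_def)
  ultimately show ?thesis
    using G(1) False unfolding smul_df_def Delta_plus_def by auto
qed

text \<open>\<open>\<Delta>\<^sup>+\<close> as a type of distance distribution functions, so that a triangle function becomes
  a commutative monoid operation and finite \<open>\<oplus>\<close>-sums can be reordered with \<open>comm_monoid_set\<close>.\<close>

typedef ddf = Delta_plus
  morphisms Rep_ddf Abs_ddf
  using eps0_in_Delta_plus by blast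

definition ddf_add :: "((ereal \<Rightarrow> real) \<Rightarrow> (ereal \<Rightarrow> real) \<Rightarrow> (ereal \<Rightarrow> real)) \<Rightarrow> ddf \<Rightarrow> ddf \<Rightarrow> ddf"
  where "ddf_add \<tau> a b = Abs_ddf (\<tau> (Rep_ddf a) (Rep_ddf b))"

text \<open>Negative scalars are sent to \<open>0\<close> only to make the operation total.\<close>

definition ddf_scale :: "real \<Rightarrow> ddf \<Rightarrow> ddf"
  where "ddf_scale c a = Abs_ddf (smul_df (max c 0) (Rep_ddf a))"

lemma ddf_scale_Abs_ddf:
  "c \<ge> 0 \<Longrightarrow> G \<in> Delta_plus \<Longrightarrow> ddf_scale c (Abs_ddf G) = Abs_ddf (smul_df c G)"
  by (simp add: ddf_scale_def Abs_ddf_inverse max_absorb1)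

lemma ddf_scale_nonpos: "c \<le> 0 \<Longrightarrow> ddf_scale c a = Abs_ddf eps0"
  by (simp add: ddf_scale_def smul_df_def)

lemma ddf_scale_eps0: "ddf_scale c (Abs_ddf eps0) = Abs_ddf eps0"
  by (simp add: ddf_scale_def Abs_ddf_inverse eps0_in_Delta_plus smul_df_eps0)

locale triangle_fun =
  fixes \<tau> :: "(ereal \<Rightarrow> real) \<Rightarrow> (ereal \<Rightarrow> real) \<Rightarrow> (ereal \<Rightarrow> real)"
  assumes triangle_function: "triangle_function \<tau>"
begin

lemma tau_closed: "G \<in> Delta_plus \<Longrightarrow> H \<in> Delta_plus \<Longrightarrow> \<tau> G H \<in> Delta_plus"
  and tau_commute: "G \<in> Delta_plus \<Longrightarrow> H \<in> Delta_plus \<Longrightarrow> \<tau> G H = \<tau> H G"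
  and tau_assoc: "G \<in> Delta_plus \<Longrightarrow> H \<in> Delta_plus \<Longrightarrow> K \<in> Delta_plus \<Longrightarrow>
      \<tau> G (\<tau> H K) = \<tau> (\<tau> G H) K"
  and tau_eps0: "G \<in> Delta_plus \<Longrightarrow> \<tau> G eps0 = G"
  using triangle_function unfolding triangle_function_def by blast+

lemma Rep_ddf_add: "Rep_ddf (ddf_add \<tau> a b) = \<tau> (Rep_ddf a) (Rep_ddf b)"
  unfolding ddf_add_def by (rule Abs_ddf_inverse) (rule tau_closed[OF Rep_ddf Rep_ddf])

sublocale ddf_sum: comm_monoid_set "ddf_add \<tau>" "Abs_ddf eps0"
proof unfold_locales
  fix a b c
  show "ddf_add \<tau> (ddf_add \<tau> a b) c = ddf_add \<tau> a (ddf_add \<tau> b c)"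
    by (simp add: ddf_add_def Abs_ddf_inverse tau_closed tau_assoc Rep_ddf)
  show "ddf_add \<tau> a b = ddf_add \<tau> b a"
    by (simp add: ddf_add_def tau_commute Rep_ddf)
  show "ddf_add \<tau> a (Abs_ddf eps0) = a"
    by (simp add: ddf_add_def Abs_ddf_inverse eps0_in_Delta_plus tau_eps0 Rep_ddf Rep_ddf_inverse)
qed

lemma oplus_list_eq_ddf_sum:
  assumes "distinct xs" and "\<forall>x\<in>set xs. f x \<in> Delta_plus"
  shows "oplus_list \<tau> (map f xs) = Rep_ddf (ddf_sum.F (\<lambda>x. Abs_ddf (f x)) (set xs))"
  using assms
proof (induction xs)
  case Nil
  then show ?case by (simp add: Abs_ddf_inverse eps0_in_Delta_plus)
next
  case (Cons x xs)
  then show ?case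
    by (cases "xs = []") (simp_all add: Rep_ddf_add Abs_ddf_inverse eps0_in_Delta_plus tau_eps0)
qed

lemma ddf_scale_sum:
  assumes "distributive_tf \<tau>" and "finite J"
  shows "ddf_scale c (ddf_sum.F g J) = ddf_sum.F (\<lambda>j. ddf_scale c (g j)) J"
  using assms(2)
proof (induction J rule: finite_induct)
  case empty
  show ?case by (simp add: ddf_scale_eps0)
next
  case (insert j J)
  have "ddf_scale c (ddf_add \<tau> a b) = ddf_add \<tau> (ddf_scale c a) (ddf_scale c b)" for a b
    using assms(1) unfolding distributive_tf_def ddf_scale_def ddf_add_def
    by (simp add: Abs_ddf_inverse tau_closed smul_df_in_Delta_plus Rep_ddf)
  with insert show ?case by simp
qed

end

lemma coeff_zero_or_covered:
  fixes \<alpha> :: "'i \<Rightarrow> real" and \<beta> :: "'j \<Rightarrow> real"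
  assumes "disjoint_family_on A I" and "finite I" and "i \<in> I" and "A i \<subseteq> \<Omega>"
    and "\<forall>x\<in>\<Omega>. (\<Sum>k\<in>I. \<alpha> k * indicator (A k) x) = (\<Sum>j\<in>J. \<beta> j * indicator (B j) x)"
  shows "\<alpha> i = 0 \<or> A i \<subseteq> (\<Union>j\<in>J. B j)"
proof (rule disjCI)
  assume "\<not> A i \<subseteq> (\<Union>j\<in>J. B j)"
  then obtain x where "x \<in> A i" and "\<forall>j\<in>J. x \<notin> B j"
    by blast
  have "\<alpha> i = (\<Sum>k\<in>I. \<alpha> k * indicator (A k) x)"
    using assms(1-3) \<open>x \<in> A i\<close> by (intro sum_indicator_disjoint_family[symmetric])
  also have "\<dots> = (\<Sum>j\<in>J. \<beta> j * indicator (B j) x)"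
    using assms(4,5) \<open>x \<in> A i\<close> by blast
  also have "\<dots> = 0"
    using \<open>\<forall>j\<in>J. x \<notin> B j\<close> by simp
  finally show "\<alpha> i = 0" .
qed

locale tau_measure = triangle_fun \<tau> + ring_of_sets \<Omega> \<Sigma>
  for \<tau> and \<Omega> :: "'a set" and \<Sigma> +
  fixes \<gamma> :: "'a set \<Rightarrow> (ereal \<Rightarrow> real)"
  assumes tau_decomposable: "tau_decomposable \<tau> \<Sigma> \<gamma>"
begin

lemma gamma_in_Delta_plus: "A \<in> \<Sigma> \<Longrightarrow> \<gamma> A \<in> Delta_plus"
  and gamma_empty: "\<gamma> {} = eps0"
  and gamma_Un: "A \<in> \<Sigma> \<Longrightarrow> B \<in> \<Sigma> \<Longrightarrow> A \<inter> B = {} \<Longrightarrow> \<gamma> (A \<union> B) = \<tau> (\<gamma> A) (\<gamma> B)"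
  using tau_decomposable unfolding tau_decomposable_def by blast+

lemma gamma_UN_disjoint:
  assumes "finite J" and "\<forall>j\<in>J. A j \<in> \<Sigma>" and "disjoint_family_on A J"
  shows "Abs_ddf (\<gamma> (\<Union>j\<in>J. A j)) = ddf_sum.F (\<lambda>j. Abs_ddf (\<gamma> (A j))) J"
  using assms
proof (induction J rule: finite_induct)
  case empty
  then show ?case by (simp add: gamma_empty)
next
  case (insert j J)
  then have A: "A j \<in> \<Sigma>" "(\<Union>k\<in>J. A k) \<in> \<Sigma>" "A j \<inter> (\<Union>k\<in>J. A k) = {}"
    by (auto simp: disjoint_family_on_def)
  have "Abs_ddf (\<gamma> (\<Union>k\<in>insert j J. A k)) = Abs_ddf (\<tau> (\<gamma> (A j)) (\<gamma> (\<Union>k\<in>J. A k)))"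
    using A by (simp add: gamma_Un)
  also have "\<dots> = ddf_add \<tau> (Abs_ddf (\<gamma> (A j))) (Abs_ddf (\<gamma> (\<Union>k\<in>J. A k)))"
    using A by (simp add: ddf_add_def Abs_ddf_inverse gamma_in_Delta_plus)
  also have "\<dots> = ddf_sum.F (\<lambda>k. Abs_ddf (\<gamma> (A k))) (insert j J)"
    using insert disjoint_family_on_mono[OF subset_insertI insert.prems(2)] by simp
  finally show ?case .
qed

lemma ddf_scale_gamma_split:
  assumes "distributive_tf \<tau>" and "finite J" and "A \<in> \<Sigma>" and "\<forall>j\<in>J. B j \<in> \<Sigma>"
    and "disjoint_family_on B J" and "c = 0 \<or> A \<subseteq> (\<Union>j\<in>J. B j)"
  shows "ddf_scale c (Abs_ddf (\<gamma> A)) = ddf_sum.F (\<lambda>j. ddf_scale c (Abs_ddf (\<gamma> (A \<inter> B j)))) J"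
  using assms(6)
proof
  assume "c = 0"
  then show ?thesis by (simp add: ddf_scale_nonpos)
next
  assume "A \<subseteq> (\<Union>j\<in>J. B j)"
  then have "A = (\<Union>j\<in>J. A \<inter> B j)" by blast
  moreover have "disjoint_family_on (\<lambda>j. A \<inter> B j) J"
    using assms(5) by (auto simp: disjoint_family_on_def)
  ultimately show ?thesis
    using assms(1-4) by (metis gamma_UN_disjoint ddf_scale_sum Int)
qed

lemma oplus_list_smul_gamma_eq_ddf_sum:
  assumes "distinct xs" and "E \<in> \<Sigma>" and "\<forall>i\<in>set xs. 0 \<le> \<alpha> i \<and> A i \<in> \<Sigma>"
  shows "oplus_list \<tau> (map (\<lambda>i. smul_df (\<alpha> i) (\<gamma> (E \<inter> A i))) xs)
    = Rep_ddf (ddf_sum.F (\<lambda>i. ddf_scale (\<alpha> i) (Abs_ddf (\<gamma> (E \<inter> A i)))) (set xs))"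
proof -
  have "oplus_list \<tau> (map (\<lambda>i. smul_df (\<alpha> i) (\<gamma> (E \<inter> A i))) xs)
      = Rep_ddf (ddf_sum.F (\<lambda>i. Abs_ddf (smul_df (\<alpha> i) (\<gamma> (E \<inter> A i)))) (set xs))"
    using assms by (intro oplus_list_eq_ddf_sum) (auto intro: smul_df_in_Delta_plus gamma_in_Delta_plus)
  also have "ddf_sum.F (\<lambda>i. Abs_ddf (smul_df (\<alpha> i) (\<gamma> (E \<inter> A i)))) (set xs)
      = ddf_sum.F (\<lambda>i. ddf_scale (\<alpha> i) (Abs_ddf (\<gamma> (E \<inter> A i)))) (set xs)"
  proof (rule ddf_sum.cong[OF refl])
    fix i assume "i \<in> set xs"
    with assms(2,3) have "0 \<le> \<alpha> i" and "\<gamma> (E \<inter> A i) \<in> Delta_plus"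
      by (auto intro: gamma_in_Delta_plus)
    then show "Abs_ddf (smul_df (\<alpha> i) (\<gamma> (E \<inter> A i))) = ddf_scale (\<alpha> i) (Abs_ddf (\<gamma> (E \<inter> A i)))"
      by (simp add: ddf_scale_Abs_ddf)
  qed
  finally show ?thesis .
qed

lemma ddf_integral_simple_repr_indep:
  assumes "distributive_tf \<tau>" and "E \<in> \<Sigma>" and "finite I" and "finite J"
    and "\<forall>i\<in>I. A i \<in> \<Sigma>" and "\<forall>j\<in>J. B j \<in> \<Sigma>"
    and "disjoint_family_on A I" and "disjoint_family_on B J"
    and f_eq_g: "\<forall>x\<in>\<Omega>. (\<Sum>i\<in>I. \<alpha> i * indicator (A i) x) = (\<Sum>j\<in>J. \<beta> j * indicator (B j) x)"
  shows "ddf_sum.F (\<lambda>i. ddf_scale (\<alpha> i) (Abs_ddf (\<gamma> (E \<inter> A i)))) I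
    = ddf_sum.F (\<lambda>j. ddf_scale (\<beta> j) (Abs_ddf (\<gamma> (E \<inter> B j)))) J"
proof -
  define cell where "cell i j = Abs_ddf (\<gamma> (E \<inter> A i \<inter> B j))" for i j
  have rows: "ddf_scale (\<alpha> i) (Abs_ddf (\<gamma> (E \<inter> A i))) = ddf_sum.F (\<lambda>j. ddf_scale (\<alpha> i) (cell i j)) J"
    if "i \<in> I" for i
  proof -
    have "A i \<subseteq> \<Omega>"
      using assms(5) that sets_into_space by blast
    then have "\<alpha> i = 0 \<or> A i \<subseteq> (\<Union>j\<in>J. B j)"
      using f_eq_g by (rule coeff_zero_or_covered[OF assms(7,3) that])
    then show ?thesis
      unfolding cell_def using assms(2,5,6,8) that
      by (intro ddf_scale_gamma_split[OF assms(1,4)]) auto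
  qed
  have cols: "ddf_scale (\<beta> j) (Abs_ddf (\<gamma> (E \<inter> B j))) = ddf_sum.F (\<lambda>i. ddf_scale (\<beta> j) (cell i j)) I"
    if "j \<in> J" for j
  proof -
    have "B j \<subseteq> \<Omega>"
      using assms(6) that sets_into_space by blast
    moreover have "\<forall>x\<in>\<Omega>. (\<Sum>k\<in>J. \<beta> k * indicator (B k) x) = (\<Sum>i\<in>I. \<alpha> i * indicator (A i) x)"
      using f_eq_g by simp
    ultimately have "\<beta> j = 0 \<or> B j \<subseteq> (\<Union>i\<in>I. A i)"
      by (rule coeff_zero_or_covered[OF assms(8,4) that])
    then have "ddf_scale (\<beta> j) (Abs_ddf (\<gamma> (E \<inter> B j)))
        = ddf_sum.F (\<lambda>i. ddf_scale (\<beta> j) (Abs_ddf (\<gamma> (E \<inter> B j \<inter> A i)))) I"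
      using assms(2,5,6,7) that
      by (intro ddf_scale_gamma_split[OF assms(1,3)]) auto
    then show ?thesis
      unfolding cell_def by (simp add: Int_ac)
  qed
  have cells: "ddf_scale (\<alpha> i) (cell i j) = ddf_scale (\<beta> j) (cell i j)"
    if "i \<in> I" and "j \<in> J" for i j
  proof (cases "E \<inter> A i \<inter> B j = {}")
    case True
    then show ?thesis by (simp add: cell_def gamma_empty ddf_scale_eps0)
  next
    case False
    then obtain x where x: "x \<in> A i" "x \<in> B j"
      by blast
    have "\<alpha> i = (\<Sum>k\<in>I. \<alpha> k * indicator (A k) x)"
      using assms(3,7) that(1) x(1) by (intro sum_indicator_disjoint_family[symmetric])
    also have "\<dots> = (\<Sum>k\<in>J. \<beta> k * indicator (B k) x)"
      using f_eq_g sets_into_space assms(5) that(1) x(1) by blast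
    also have "\<dots> = \<beta> j"
      using assms(4,8) that(2) x(2) by (intro sum_indicator_disjoint_family)
    finally show ?thesis by simp
  qed
  have "ddf_sum.F (\<lambda>i. ddf_scale (\<alpha> i) (Abs_ddf (\<gamma> (E \<inter> A i)))) I
      = ddf_sum.F (\<lambda>i. ddf_sum.F (\<lambda>j. ddf_scale (\<beta> j) (cell i j)) J) I"
    using rows cells by (simp cong: ddf_sum.cong)
  also have "\<dots> = ddf_sum.F (\<lambda>j. ddf_sum.F (\<lambda>i. ddf_scale (\<beta> j) (cell i j)) I) J"
    by (rule ddf_sum.swap)
  also have "\<dots> = ddf_sum.F (\<lambda>j. ddf_scale (\<beta> j) (Abs_ddf (\<gamma> (E \<inter> B j)))) J"
    using cols by (simp cong: ddf_sum.cong)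
  finally show ?thesis .
qed

end

theorem lemma4p2:
  fixes \<tau> :: "(ereal \<Rightarrow> real) \<Rightarrow> (ereal \<Rightarrow> real) \<Rightarrow> (ereal \<Rightarrow> real)"
    and \<Omega> :: "'a set" and \<Sigma> :: "'a set set" and \<gamma> :: "'a set \<Rightarrow> (ereal \<Rightarrow> real)"
    and E :: "'a set"
    and n m :: nat and \<alpha> \<beta> :: "nat \<Rightarrow> real" and Es Fs :: "nat \<Rightarrow> 'a set"
  assumes "distributive_tf \<tau>"
    and "ring_of_sets \<Omega> \<Sigma>" and "\<Omega> \<noteq> {}"
    and "tau_decomposable \<tau> \<Sigma> \<gamma>"
    and "E \<in> \<Sigma>"
    and "n \<ge> 1" and "m \<ge> 1"
    and "\<forall>i\<in>{1..n}. 0 \<le> \<alpha> i \<and> Es i \<in> \<Sigma>"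
    and "\<forall>i\<in>{1..n}. \<forall>k\<in>{1..n}. i \<noteq> k \<longrightarrow> Es i \<inter> Es k = {}"
    and "\<forall>j\<in>{1..m}. 0 \<le> \<beta> j \<and> Fs j \<in> \<Sigma>"
    and "\<forall>j\<in>{1..m}. \<forall>k\<in>{1..m}. j \<noteq> k \<longrightarrow> Fs j \<inter> Fs k = {}"
    and "\<forall>x\<in>\<Omega>. (\<Sum>i=1..n. \<alpha> i * indicator (Es i) x) = (\<Sum>j=1..m. \<beta> j * indicator (Fs j) x)"
  shows "oplus_list \<tau> (map (\<lambda>i. smul_df (\<alpha> i) (\<gamma> (E \<inter> Es i))) [1..<n+1])
       = oplus_list \<tau> (map (\<lambda>j. smul_df (\<beta> j) (\<gamma> (E \<inter> Fs j))) [1..<m+1])"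
proof -
  interpret tau_measure \<tau> \<Omega> \<Sigma> \<gamma>
    using assms(1,2,4)
    by (simp add: tau_measure_def tau_measure_axioms_def triangle_fun_def distributive_tf_def)
  have "disjoint_family_on Es {1..n}" and "disjoint_family_on Fs {1..m}"
    using assms(9,11) unfolding disjoint_family_on_def by blast+
  then have "ddf_sum.F (\<lambda>i. ddf_scale (\<alpha> i) (Abs_ddf (\<gamma> (E \<inter> Es i)))) {1..n}
      = ddf_sum.F (\<lambda>j. ddf_scale (\<beta> j) (Abs_ddf (\<gamma> (E \<inter> Fs j)))) {1..m}"
    using assms(1,5,8,10,12) by (intro ddf_integral_simple_repr_indep) auto
  moreover have "set [1..<k+1] = {1..k}" for k :: nat
    by auto
  ultimately show ?thesis
    using assms(5,8,10) by (simp add: oplus_list_smul_gamma_eq_ddf_sum)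
qed

end
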